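(* Let $G$ and $H$ be finite precovers of the rose $R_k$ and let $K$ be a quotient of the precover $G \sqcup H$ whose restriction to $G$ is injective. For $n$ large let $\overline{G}$ be a random degree $n$ completion of $G$. Then, with $G$, $H$, $K$ fixed and $n \to \infty$, $$\mathbb{E}\big(\mu_{K \to \overline{G}}\big) = n^{\chi_G(K)} + \mathcal{O}\big(n^{\chi_G(K) - 1}\big).$$
   Context: The rose $R_k$ has one vertex and $k$ oriented loops labelled $a_1,\ldots,a_k$. A precover of $R_k$ is a finite oriented graph with edges labelled by $a_1,\ldots,a_k$ such that each vertex has at most one outgoing and at most one incoming edge of each label; maps are label- and orientation-preserving graph morphisms. A quotient of a precover $P$ is a surjective, locally injective, label- and orientation-preserving simplicial map $P \twoheadrightarrow K$. Random degree $n$ completion: let $G'$ be the disjoint union of $G$ with $n - |V(G)|$ isolated vertices; for each $j$, choose uniformly at random (independently in $j$) a bijection from the set of vertices of $G'$ lacking an outgoing $a_j$-edge to those lacking an incoming $a_j$-edge, and add an $a_j$-edge from each $v$ to its image; the result $\overline{G}$ contains $G$ as a subgraph. $\mu_{K \to \overline{G}}$ is the number of injective maps $K \to \overline{G}$ such that the composition $G \to K \to \overline{G}$ is the natural inclusion of $G$ in $\overline{G}$. The relative Euler characteristic is $\chi_G(K) = \chi(K) - \chi(G)$, where $\chi$ denotes (number of vertices) minus (number of edges). *)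

theory Defs
  imports "HOL-Probability.Probability" "HOL-Library.Landau_Symbols"
begin

text \<open>Labelled oriented graphs over the labels a_0,...,a_(k-1) are given by a vertex set V
and an edge set E of triples (u, j, v), meaning an a_j-edge from u to v.
(In a precover there is at most one a_j-edge leaving a vertex, so parallel
edges of the same label and orientation never occur and triples suffice.)\<close>

definition is_precover :: "nat \<Rightarrow> 'v set \<Rightarrow> ('v \<times> nat \<times> 'v) set \<Rightarrow> bool" where
  "is_precover k V E \<longleftrightarrow> finite V \<and> E \<subseteq> V \<times> {..<k} \<times> V \<and>
     (\<forall>u j v v'. (u, j, v) \<in> E \<longrightarrow> (u, j, v') \<in> E \<longrightarrow> v = v') \<and>
     (\<forall>u u' j v. (u, j, v) \<in> E \<longrightarrow> (u', j, v) \<in> E \<longrightarrow> u = u')"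

definition graph_morphism ::
  "'v set \<Rightarrow> ('v \<times> nat \<times> 'v) set \<Rightarrow> 'w set \<Rightarrow> ('w \<times> nat \<times> 'w) set \<Rightarrow> ('v \<Rightarrow> 'w) \<Rightarrow> bool" where
  "graph_morphism V E V' E' f \<longleftrightarrow> f ` V \<subseteq> V' \<and> (\<forall>(u, j, v) \<in> E. (f u, j, f v) \<in> E')"

definition edge_image :: "('v \<Rightarrow> 'w) \<Rightarrow> ('v \<times> nat \<times> 'v) set \<Rightarrow> ('w \<times> nat \<times> 'w) set" where
  "edge_image f E = (\<lambda>(u, j, v). (f u, j, f v)) ` E"

definition locally_injective :: "('v \<times> nat \<times> 'v) set \<Rightarrow> ('v \<Rightarrow> 'w) \<Rightarrow> bool" where
  "locally_injective E f \<longleftrightarrow>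
     (\<forall>u j v j' v'. (u, j, v) \<in> E \<longrightarrow> (u, j', v') \<in> E \<longrightarrow>
         (j, f v) = (j', f v') \<longrightarrow> (j, v) = (j', v')) \<and>
     (\<forall>u j v u' j'. (u, j, v) \<in> E \<longrightarrow> (u', j', v) \<in> E \<longrightarrow>
         (f u, j) = (f u', j') \<longrightarrow> (u, j) = (u', j'))"

definition is_quotient ::
  "nat \<Rightarrow> 'v set \<Rightarrow> ('v \<times> nat \<times> 'v) set \<Rightarrow> 'w set \<Rightarrow> ('w \<times> nat \<times> 'w) set \<Rightarrow> ('v \<Rightarrow> 'w) \<Rightarrow> bool" where
  "is_quotient k V E V' E' q \<longleftrightarrow> is_precover k V' E' \<and> graph_morphism V E V' E' q \<and>
     q ` V = V' \<and> edge_image q E = E' \<and> locally_injective E q"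

definition du_vertices :: "'a set \<Rightarrow> 'b set \<Rightarrow> ('a + 'b) set" where
  "du_vertices VG VH = Inl ` VG \<union> Inr ` VH"

definition du_edges :: "('a \<times> nat \<times> 'a) set \<Rightarrow> ('b \<times> nat \<times> 'b) set \<Rightarrow> (('a + 'b) \<times> nat \<times> ('a + 'b)) set" where
  "du_edges EG EH = (\<lambda>(u, j, v). (Inl u, j, Inl v)) ` EG \<union> (\<lambda>(u, j, v). (Inr u, j, Inr v)) ` EH"

text \<open>Random degree n completion. G' is G together with the isolated vertices Inr 0, ..., Inr (n - |V(G)| - 1).\<close>
definition comp_vertices :: "'a set \<Rightarrow> nat \<Rightarrow> ('a + nat) set" where
  "comp_vertices VG n = Inl ` VG \<union> Inr ` {..<n - card VG}"

definition comp_base_edges :: "('a \<times> nat \<times> 'a) set \<Rightarrow> (('a + nat) \<times> nat \<times> ('a + nat)) set" where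
  "comp_base_edges EG = (\<lambda>(u, j, v). (Inl u, j, Inl v)) ` EG"

definition no_out :: "'a set \<Rightarrow> ('a \<times> nat \<times> 'a) set \<Rightarrow> nat \<Rightarrow> nat \<Rightarrow> ('a + nat) set" where
  "no_out VG EG n j = {x \<in> comp_vertices VG n. \<not> (\<exists>y. (x, j, y) \<in> comp_base_edges EG)}"

definition no_in :: "'a set \<Rightarrow> ('a \<times> nat \<times> 'a) set \<Rightarrow> nat \<Rightarrow> nat \<Rightarrow> ('a + nat) set" where
  "no_in VG EG n j = {y \<in> comp_vertices VG n. \<not> (\<exists>x. (x, j, y) \<in> comp_base_edges EG)}"

text \<open>The sample space: one bijection no_out j -> no_in j for each label j < k (as extensional functions).\<close>
definition completion_choices ::
  "nat \<Rightarrow> 'a set \<Rightarrow> ('a \<times> nat \<times> 'a) set \<Rightarrow> nat \<Rightarrow> (nat \<Rightarrow> ('a + nat) \<Rightarrow> ('a + nat)) set" where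
  "completion_choices k VG EG n =
     (\<Pi>\<^sub>E j\<in>{..<k}. {f \<in> extensional (no_out VG EG n j). bij_betw f (no_out VG EG n j) (no_in VG EG n j)})"

definition completion_edges ::
  "nat \<Rightarrow> 'a set \<Rightarrow> ('a \<times> nat \<times> 'a) set \<Rightarrow> nat \<Rightarrow> (nat \<Rightarrow> ('a + nat) \<Rightarrow> ('a + nat))
     \<Rightarrow> (('a + nat) \<times> nat \<times> ('a + nat)) set" where
  "completion_edges k VG EG n \<sigma> =
     comp_base_edges EG \<union> {(x, j, \<sigma> j x) | x j. j < k \<and> x \<in> no_out VG EG n j}"

definition mu ::
  "'c set \<Rightarrow> ('c \<times> nat \<times> 'c) set \<Rightarrow> ('a \<Rightarrow> 'c) \<Rightarrow> 'a set
     \<Rightarrow> ('a + nat) set \<Rightarrow> (('a + nat) \<times> nat \<times> ('a + nat)) set \<Rightarrow> nat" where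
  "mu VK EK qG VG VGb EGb =
     card {\<phi> \<in> VK \<rightarrow>\<^sub>E VGb. inj_on \<phi> VK \<and> graph_morphism VK EK VGb EGb \<phi> \<and>
                           (\<forall>g\<in>VG. \<phi> (qG g) = Inl g)}"

definition expected_mu ::
  "nat \<Rightarrow> 'a set \<Rightarrow> ('a \<times> nat \<times> 'a) set \<Rightarrow> 'c set \<Rightarrow> ('c \<times> nat \<times> 'c) set \<Rightarrow> ('a \<Rightarrow> 'c) \<Rightarrow> nat \<Rightarrow> real" where
  "expected_mu k VG EG VK EK qG n =
     measure_pmf.expectation (pmf_of_set (completion_choices k VG EG n))
       (\<lambda>\<sigma>. real (mu VK EK qG VG (comp_vertices VG n) (completion_edges k VG EG n \<sigma>)))"

definition euler_char :: "'v set \<Rightarrow> ('v \<times> nat \<times> 'v) set \<Rightarrow> int" where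
  "euler_char V E = int (card V) - int (card E)"

end

theory Submission
  imports Defs "HOL-Real_Asymp.Real_Asymp"
begin

text \<open>
  Let \<phi> be an injection from the vertices of K into those of the completion that is the
  identity on G. It is a morphism exactly when, for every label j, the random bijection
  \<sigma> j sends \<phi> u to \<phi> v for each of the e j edges (u, j, v) of K that do not come
  from G. These pairs form a partial matching between the n - d j vertices lacking an outgoing
  and the n - d j vertices lacking an incoming a_j-edge (d j being the number of a_j-edges of G),
  so this happens with probability (n - d j - e j)! / (n - d j)!. There are
  (n - |V(G)|)(n - |V(G)| - 1)... choices of \<phi>, one factor for each vertex of K outside G.
  Hence the expectation is a product of |V(K)| - |V(G)| factors n - O(1) divided by a product of
  \<Sum>j. e j = |E(K)| - |E(G)| such factors, which is n^\<chi>_G(K) (1 + O(1/n)).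
\<close>

section \<open>Ratios of products of linear factors\<close>

definition near_one :: "(nat \<Rightarrow> real) \<Rightarrow> bool" where
  "near_one u \<longleftrightarrow> (\<lambda>n. u n - 1) \<in> O(\<lambda>n. 1 / real n)"

lemma near_one_mult:
  assumes "near_one u" "near_one v"
  shows "near_one (\<lambda>n. u n * v n)"
proof -
  have u: "(\<lambda>n. u n - 1) \<in> O(\<lambda>n. 1 / real n)" and v: "(\<lambda>n. v n - 1) \<in> O(\<lambda>n. 1 / real n)"
    using assms by (simp_all add: near_one_def)
  have "(\<lambda>n. (u n - 1) * (v n - 1)) \<in> O(\<lambda>n. 1 / real n * (1 / real n))"
    using u v by (rule landau_o.big.mult)
  also have "(\<lambda>n. 1 / real n * (1 / real n)) \<in> O(\<lambda>n. 1 / real n)"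
    by real_asymp
  finally have uv: "(\<lambda>n. (u n - 1) * (v n - 1)) \<in> O(\<lambda>n. 1 / real n)" .
  have "(\<lambda>n. (u n - 1) * (v n - 1) + (u n - 1) + (v n - 1)) \<in> O(\<lambda>n. 1 / real n)"
    by (intro sum_in_bigo(1) uv u v)
  moreover have "(\<lambda>n. (u n - 1) * (v n - 1) + (u n - 1) + (v n - 1)) = (\<lambda>n. u n * v n - 1)"
    by (simp add: algebra_simps)
  ultimately show ?thesis
    by (simp add: near_one_def)
qed

lemma near_one_prod:
  "(\<And>i. i \<in> I \<Longrightarrow> near_one (f i)) \<Longrightarrow> near_one (\<lambda>n. \<Prod>i\<in>I. f i n)"
proof (induction I rule: infinite_finite_induct)
  case (insert i I)
  then show ?case
    by (simp add: near_one_mult)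
qed (simp_all add: near_one_def)

lemma prod_ratio_asymptotics:
  fixes c :: "'i \<Rightarrow> real" and d :: "'j \<Rightarrow> real"
  assumes "finite I" "finite J"
  defines "r \<equiv> int (card I) - int (card J)"
  shows "(\<lambda>n. (\<Prod>i\<in>I. real n - c i) / (\<Prod>j\<in>J. real n - d j) - real n powr of_int r)
           \<in> O(\<lambda>n. real n powr of_int (r - 1))"
proof -
  define R where
    "R n = (\<Prod>i\<in>I. (real n - c i) / real n) * (\<Prod>j\<in>J. real n / (real n - d j))" for n
  have "near_one R"
    unfolding R_def by (intro near_one_mult near_one_prod) (simp_all add: near_one_def, real_asymp+)
  have ratio: "(\<Prod>i\<in>I. real n - c i) / (\<Prod>j\<in>J. real n - d j) = real n powr of_int r * R n"
    if "n > 0" for n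
  proof -
    have "real n powr of_int r = real n ^ card I / real n ^ card J"
      using that by (simp add: r_def powr_diff powr_realpow)
    then show ?thesis
      using that by (simp add: R_def prod_dividef)
  qed
  have "(\<lambda>n. real n powr of_int r * (R n - 1)) \<in> O(\<lambda>n. real n powr of_int r * (1 / real n))"
    using \<open>near_one R\<close> unfolding near_one_def by (rule landau_o.big.mult_left)
  also have "(\<lambda>n. real n powr of_int r * (1 / real n)) \<in> \<Theta>(\<lambda>n. real n powr of_int (r - 1))"
    by (intro bigthetaI_cong eventually_mono[OF eventually_gt_at_top[of 0]]) (simp add: powr_diff)
  finally show ?thesis
    by (rule landau_o.big.in_cong[THEN iffD1, rotated])
       (intro eventually_mono[OF eventually_gt_at_top[of 0]], simp add: ratio algebra_simps)
qed

lemma fact_div_fact_diff: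
  "e \<le> m \<Longrightarrow> (fact m / fact (m - e) :: real) = (\<Prod>i<e. real m - real i)"
  by (simp add: fact_binomial[symmetric] binomial_gbinomial gbinomial_mult_fact atLeast0LessThan)

lemma prod_fact_ratio_Sigma:
  assumes "finite A" "\<And>j. j \<in> A \<Longrightarrow> d j + e j \<le> n"
  shows "(\<Prod>j\<in>A. fact (n - d j)) / (\<Prod>j\<in>A. fact (n - d j - e j))
    = (\<Prod>(j, i)\<in>Sigma A (\<lambda>j. {..<e j}). real n - real (d j + i))"
proof -
  have "(\<Prod>j\<in>A. fact (n - d j)) / (\<Prod>j\<in>A. fact (n - d j - e j))
      = (\<Prod>j\<in>A. fact (n - d j) / fact (n - d j - e j) :: real)"
    by (rule prod_dividef[symmetric])
  also have "\<dots> = (\<Prod>j\<in>A. \<Prod>i<e j. real (n - d j) - real i)"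
  proof (intro prod.cong refl fact_div_fact_diff)
    show "e j \<le> n - d j" if "j \<in> A" for j
      using assms(2)[OF that] by linarith
  qed
  also have "\<dots> = (\<Prod>j\<in>A. \<Prod>i<e j. real n - real (d j + i))"
  proof (intro prod.cong refl)
    fix j i assume "j \<in> A"
    then have "d j \<le> n"
      using assms(2) by fastforce
    then show "real (n - d j) - real i = real n - real (d j + i)"
      by (simp add: of_nat_diff)
  qed
  also have "\<dots> = (\<Prod>(j, i)\<in>Sigma A (\<lambda>j. {..<e j}). real n - real (d j + i))"
    using assms(1) by (simp add: prod.Sigma)
  finally show ?thesis .
qed

section \<open>Counting injections and bijections with prescribed values\<close>

lemma inj_on_override_on:
  assumes "inj_on g (A - D)" "inj_on h D" "g ` (A - D) \<inter> h ` D = {}"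
  shows "inj_on (override_on g h D) A"
proof (rule inj_onI)
  fix x y assume "x \<in> A" "y \<in> A" "override_on g h D x = override_on g h D y"
  then show "x = y"
    using assms by (cases "x \<in> D"; cases "y \<in> D") (auto dest: inj_onD)
qed

lemma card_inj_on_extending:
  assumes "finite A" "finite B" "D \<subseteq> A" "inj_on h D" "h ` D \<subseteq> B"
  shows "card {f \<in> A \<rightarrow>\<^sub>E B. inj_on f A \<and> (\<forall>x\<in>D. f x = h x)}
    = (\<Prod>i<card A - card D. card B - card D - i)"
proof -
  define S where "S = {f \<in> A \<rightarrow>\<^sub>E B. inj_on f A \<and> (\<forall>x\<in>D. f x = h x)}"
  define T where "T = {g \<in> (A - D) \<rightarrow>\<^sub>E (B - h ` D). inj_on g (A - D)}"
  have "card (A - D) = card A - card D" "card (B - h ` D) = card B - card D"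
    using assms by (simp_all add: card_Diff_subset finite_subset card_image)
  then have card_T: "card T = (\<Prod>i<card A - card D. card B - card D - i)"
    using card_inj_on_subset_funcset[of "A - D" "B - h ` D" "A - D"] assms
    by (simp add: T_def atLeast0LessThan)
  have "bij_betw (\<lambda>f. restrict f (A - D)) S T"
  proof (rule bij_betw_byWitness[where f' = "\<lambda>g. restrict (override_on g h D) A"])
    show "\<forall>f\<in>S. restrict (override_on (restrict f (A - D)) h D) A = f"
      using assms(3) by (auto simp: S_def override_on_def fun_eq_iff PiE_def extensional_def)
    show "\<forall>g\<in>T. restrict (restrict (override_on g h D) A) (A - D) = g"
      by (auto simp: T_def override_on_def fun_eq_iff PiE_def extensional_def)
    show "(\<lambda>f. restrict f (A - D)) ` S \<subseteq> T"
    proof clarify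
      fix f assume f: "f \<in> S"
      have "f x \<notin> h ` D" if "x \<in> A - D" for x
      proof
        assume "f x \<in> h ` D"
        then obtain y where "y \<in> D" "f x = f y"
          using f by (auto simp: S_def)
        then show False
          using f that assms(3) inj_onD[of f A x y] by (auto simp: S_def)
      qed
      then show "restrict f (A - D) \<in> T"
        using f by (auto simp: S_def T_def inj_on_def)
    qed
    show "(\<lambda>g. restrict (override_on g h D) A) ` T \<subseteq> S"
    proof clarify
      fix g assume g: "g \<in> T"
      then have "inj_on (override_on g h D) A"
        using assms(4) by (intro inj_on_override_on) (auto simp: T_def)
      then show "restrict (override_on g h D) A \<in> S"
        using g assms(3,5) by (auto simp: S_def T_def override_on_def PiE_iff image_subset_iff)
    qed
  qed
  then show ?thesis
    using card_T by (simp add: S_def bij_betw_same_card)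
qed

lemma card_bij_betw_extending_matching:
  assumes "finite A" "finite B" "card A = card B"
    and "C \<subseteq> A \<times> B" "inj_on fst C" "inj_on snd C"
  shows "card {f \<in> extensional A. bij_betw f A B \<and> (\<forall>(x, y)\<in>C. f x = y)} = fact (card A - card C)"
proof -
  define h where "h x = snd (the_inv_into C fst x)" for x
  have h: "h (fst c) = snd c" if "c \<in> C" for c
    using that assms(5) by (simp add: h_def the_inv_into_f_f)
  have "inj_on h (fst ` C)"
    using assms(6) by (auto simp: inj_on_def h dest: inj_onD)
  moreover have "h ` fst ` C \<subseteq> B" "fst ` C \<subseteq> A"
    using assms(4) h by force+
  moreover have "card (fst ` C) = card C"
    using assms(5) by (rule card_image)
  moreover have "bij_betw f A B \<longleftrightarrow> f ` A \<subseteq> B \<and> inj_on f A" for f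
  proof
    assume f: "f ` A \<subseteq> B \<and> inj_on f A"
    then have "f ` A = B"
      using assms(2,3) by (intro card_subset_eq) (simp_all add: card_image)
    then show "bij_betw f A B"
      using f by (simp add: bij_betw_def)
  qed (auto simp: bij_betw_def)
  then have "{f \<in> extensional A. bij_betw f A B \<and> (\<forall>(x, y)\<in>C. f x = y)}
      = {f \<in> A \<rightarrow>\<^sub>E B. inj_on f A \<and> (\<forall>x\<in>fst ` C. f x = h x)}"
    using h by (auto simp: PiE_def)
  ultimately show ?thesis
    using assms(1,2,3) card_inj_on_extending[of A B "fst ` C" h]
    by (simp add: fact_prod_rev atLeast0LessThan)
qed

lemma sum_card_filter_swap:
  assumes "finite A" "finite B"
  shows "(\<Sum>x\<in>A. card {y\<in>B. P x y}) = (\<Sum>y\<in>B. card {x\<in>A. P x y})"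
proof -
  have card_filter: "card {z\<in>Z. Q z} = (\<Sum>z\<in>Z. if Q z then 1 else 0)"
    if "finite Z" for Z and Q :: "_ \<Rightarrow> bool"
    using sum.inter_filter[OF that, of "\<lambda>_. 1 :: nat" Q] by simp
  have "(\<Sum>x\<in>A. card {y\<in>B. P x y}) = (\<Sum>x\<in>A. \<Sum>y\<in>B. if P x y then 1 else 0)"
    using card_filter[OF assms(2)] by simp
  also have "\<dots> = (\<Sum>y\<in>B. \<Sum>x\<in>A. if P x y then 1 else 0)"
    by (rule sum.swap)
  also have "\<dots> = (\<Sum>y\<in>B. card {x\<in>A. P x y})"
    using card_filter[OF assms(1)] by simp
  finally show ?thesis .
qed

section \<open>Precovers and their completions\<close>

lemma precover_edge_mem:
  assumes "is_precover k V E" "(u, j, v) \<in> E"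
  shows "u \<in> V" "j < k" "v \<in> V"
  using assms by (auto simp: is_precover_def)

lemma precover_out_unique:
  "is_precover k V E \<Longrightarrow> (u, j, v) \<in> E \<Longrightarrow> (u, j, v') \<in> E \<Longrightarrow> v = v'"
  by (simp add: is_precover_def)

lemma precover_in_unique:
  "is_precover k V E \<Longrightarrow> (u, j, v) \<in> E \<Longrightarrow> (u', j, v) \<in> E \<Longrightarrow> u = u'"
  by (simp add: is_precover_def)

lemma precover_finite:
  assumes "is_precover k V E"
  shows "finite V" "finite E"
proof -
  show "finite V"
    using assms by (simp add: is_precover_def)
  then show "finite E"
    using assms unfolding is_precover_def by (meson finite_SigmaI finite_lessThan finite_subset)
qed

lemma graph_morphism_du_Inl:
  assumes "graph_morphism (du_vertices VG VH) (du_edges EG EH) V E q"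
  shows "graph_morphism VG EG V E (q \<circ> Inl)"
proof -
  have vertices: "q ` du_vertices VG VH \<subseteq> V"
    and edges: "\<forall>(u, j, v)\<in>du_edges EG EH. (q u, j, q v) \<in> E"
    using assms by (simp_all add: graph_morphism_def)
  have "(q (Inl u), j, q (Inl v)) \<in> E" if "(u, j, v) \<in> EG" for u j v
  proof -
    have "(Inl u, j, Inl v) \<in> du_edges EG EH"
      using that by (force simp: du_edges_def)
    then show ?thesis
      using edges by fastforce
  qed
  then show ?thesis
    using vertices by (auto simp: graph_morphism_def du_vertices_def)
qed

definition edges_labelled :: "nat \<Rightarrow> ('v \<times> nat \<times> 'v) set \<Rightarrow> ('v \<times> nat \<times> 'v) set" where
  "edges_labelled j E = {e \<in> E. fst (snd e) = j}"

lemma sum_card_edges_labelled: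
  assumes "finite E" "E \<subseteq> V \<times> {..<k} \<times> V"
  shows "(\<Sum>j<k. card (edges_labelled j E)) = card E"
proof -
  have labels: "(\<lambda>e. fst (snd e)) ` E \<subseteq> {..<k}"
    using assms(2) by auto
  show ?thesis
    using sum.group[OF assms(1) finite_lessThan labels, of "\<lambda>_. 1 :: nat"]
    by (simp add: edges_labelled_def)
qed

lemma finite_comp_vertices: "finite VG \<Longrightarrow> finite (comp_vertices VG n)"
  by (simp add: comp_vertices_def)

lemma card_comp_vertices:
  "finite VG \<Longrightarrow> card VG \<le> n \<Longrightarrow> card (comp_vertices VG n) = n"
  unfolding comp_vertices_def by (subst card_Un_disjoint) (auto simp: card_image)

lemma comp_base_edges_iff:
  "(x, j, y) \<in> comp_base_edges EG \<longleftrightarrow> (\<exists>g g'. x = Inl g \<and> y = Inl g' \<and> (g, j, g') \<in> EG)"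
  by (force simp: comp_base_edges_def)

lemma no_out_eq: "no_out VG EG n j = comp_vertices VG n - Inl ` fst ` edges_labelled j EG"
  by (force simp: no_out_def comp_base_edges_iff edges_labelled_def)

lemma no_in_eq: "no_in VG EG n j = comp_vertices VG n - Inl ` (\<lambda>e. snd (snd e)) ` edges_labelled j EG"
  by (force simp: no_in_def comp_base_edges_iff edges_labelled_def)

lemma card_no_out:
  assumes "is_precover k VG EG" "card VG \<le> n"
  shows "card (no_out VG EG n j) = n - card (edges_labelled j EG)"
proof -
  have "inj_on fst (edges_labelled j EG)"
    using precover_out_unique[OF assms(1)] by (force simp: inj_on_def edges_labelled_def)
  moreover have "Inl ` fst ` edges_labelled j EG \<subseteq> comp_vertices VG n"
    using precover_edge_mem[OF assms(1)] by (force simp: comp_vertices_def edges_labelled_def)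
  ultimately show ?thesis
    using assms precover_finite[OF assms(1)]
    by (simp add: no_out_eq card_Diff_subset card_comp_vertices card_image edges_labelled_def)
qed

lemma card_no_in:
  assumes "is_precover k VG EG" "card VG \<le> n"
  shows "card (no_in VG EG n j) = n - card (edges_labelled j EG)"
proof -
  have "inj_on (\<lambda>e. snd (snd e)) (edges_labelled j EG)"
    using precover_in_unique[OF assms(1)] by (force simp: inj_on_def edges_labelled_def)
  moreover have "Inl ` (\<lambda>e. snd (snd e)) ` edges_labelled j EG \<subseteq> comp_vertices VG n"
    using precover_edge_mem[OF assms(1)] by (force simp: comp_vertices_def edges_labelled_def)
  ultimately show ?thesis
    using assms precover_finite[OF assms(1)]
    by (simp add: no_in_eq card_Diff_subset card_comp_vertices card_image edges_labelled_def)
qed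

lemma finite_no_out: "finite VG \<Longrightarrow> finite (no_out VG EG n j)"
  using finite_comp_vertices[of VG n] by (simp add: no_out_def)

lemma finite_no_in: "finite VG \<Longrightarrow> finite (no_in VG EG n j)"
  using finite_comp_vertices[of VG n] by (simp add: no_in_def)

section \<open>Embeddings of K into a random completion of G\<close>

locale precover_inclusion =
  fixes k :: nat and VG :: "'a set" and EG :: "('a \<times> nat \<times> 'a) set"
    and VK :: "'c set" and EK :: "('c \<times> nat \<times> 'c) set" and \<iota> :: "'a \<Rightarrow> 'c"
  assumes precover_G: "is_precover k VG EG"
    and precover_K: "is_precover k VK EK"
    and morphism: "graph_morphism VG EG VK EK \<iota>"
    and inj_\<iota>: "inj_on \<iota> VG"
begin

definition new_edges :: "('c \<times> nat \<times> 'c) set" where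
  "new_edges = EK - edge_image \<iota> EG"

definition embeddings :: "nat \<Rightarrow> ('c \<Rightarrow> 'a + nat) set" where
  "embeddings n = {\<phi> \<in> VK \<rightarrow>\<^sub>E comp_vertices VG n. inj_on \<phi> VK \<and> (\<forall>g\<in>VG. \<phi> (\<iota> g) = Inl g)}"

definition forced_pairs :: "('c \<Rightarrow> 'a + nat) \<Rightarrow> nat \<Rightarrow> (('a + nat) \<times> ('a + nat)) set" where
  "forced_pairs \<phi> j = (\<lambda>(u, _, v). (\<phi> u, \<phi> v)) ` edges_labelled j new_edges"

lemma image_edge_mem: "(g, j, g') \<in> EG \<Longrightarrow> (\<iota> g, j, \<iota> g') \<in> EK"
  using morphism by (auto simp: graph_morphism_def)

lemma edge_image_subset: "edge_image \<iota> EG \<subseteq> EK"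
  using image_edge_mem by (auto simp: edge_image_def)

lemma card_VG_le: "card VG \<le> card VK"
proof -
  have "card (\<iota> ` VG) \<le> card VK"
    using morphism precover_finite(1)[OF precover_K] by (intro card_mono) (auto simp: graph_morphism_def)
  then show ?thesis
    using inj_\<iota> by (simp add: card_image)
qed

lemma new_edge_mem:
  assumes "(u, j, v) \<in> new_edges"
  shows "u \<in> VK" "v \<in> VK" "j < k" "(u, j, v) \<in> EK"
  using assms precover_edge_mem[OF precover_K] by (auto simp: new_edges_def)

lemma sum_card_new_edges_labelled:
  "(\<Sum>j<k. card (edges_labelled j new_edges)) + card EG = card EK"
proof -
  have "finite new_edges" "new_edges \<subseteq> VK \<times> {..<k} \<times> VK"
    using precover_finite(2)[OF precover_K] new_edge_mem by (auto simp: new_edges_def)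
  then have "(\<Sum>j<k. card (edges_labelled j new_edges)) = card new_edges"
    by (rule sum_card_edges_labelled)
  moreover have "inj_on (\<lambda>(u, j, v). (\<iota> u, j, \<iota> v)) EG"
    using inj_\<iota> precover_edge_mem[OF precover_G] by (auto simp: inj_on_def)
  then have "card (edge_image \<iota> EG) = card EG"
    by (simp add: edge_image_def card_image)
  moreover have "card (edge_image \<iota> EG) \<le> card EK" "finite (edge_image \<iota> EG)"
    using edge_image_subset precover_finite(2)[OF precover_K] by (auto intro: card_mono finite_subset)
  ultimately show ?thesis
    using edge_image_subset by (simp add: new_edges_def card_Diff_subset)
qed

lemma new_edge_tail:
  assumes "(u, j, v) \<in> new_edges" "(g, j, g') \<in> EG"
  shows "u \<noteq> \<iota> g"
proof
  assume "u = \<iota> g"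
  then have "v = \<iota> g'"
    using assms precover_out_unique[OF precover_K] image_edge_mem new_edge_mem(4) by blast
  then show False
    using assms \<open>u = \<iota> g\<close> by (force simp: new_edges_def edge_image_def)
qed

lemma new_edge_head:
  assumes "(u, j, v) \<in> new_edges" "(g, j, g') \<in> EG"
  shows "v \<noteq> \<iota> g'"
proof
  assume "v = \<iota> g'"
  then have "u = \<iota> g"
    using assms precover_in_unique[OF precover_K] image_edge_mem new_edge_mem(4) by blast
  then show False
    using assms \<open>v = \<iota> g'\<close> by (force simp: new_edges_def edge_image_def)
qed

lemma embedding_inj:
  "\<phi> \<in> embeddings n \<Longrightarrow> u \<in> VK \<Longrightarrow> u' \<in> VK \<Longrightarrow> \<phi> u = \<phi> u' \<Longrightarrow> u = u'"
  by (auto simp: embeddings_def dest: inj_onD)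

lemma embedding_Inl:
  assumes "\<phi> \<in> embeddings n" "u \<in> VK" "\<phi> u = Inl g" "g \<in> VG"
  shows "u = \<iota> g"
proof -
  have "\<phi> (\<iota> g) = Inl g" "\<iota> g \<in> VK"
    using assms morphism by (auto simp: embeddings_def graph_morphism_def)
  then show ?thesis
    using embedding_inj[OF assms(1,2)] assms(3) by simp
qed

lemma embedding_tail_no_out:
  assumes "\<phi> \<in> embeddings n" "(u, j, v) \<in> new_edges"
  shows "\<phi> u \<in> no_out VG EG n j"
proof -
  have u: "u \<in> VK"
    using assms(2) by (rule new_edge_mem)
  have "\<not> (\<exists>y. (\<phi> u, j, y) \<in> comp_base_edges EG)"
  proof
    assume "\<exists>y. (\<phi> u, j, y) \<in> comp_base_edges EG"
    then obtain g g' where "\<phi> u = Inl g" "(g, j, g') \<in> EG"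
      by (auto simp: comp_base_edges_iff)
    then show False
      using embedding_Inl[OF assms(1) u] new_edge_tail[OF assms(2)] precover_edge_mem[OF precover_G]
      by blast
  qed
  then show ?thesis
    using assms(1) u by (auto simp: no_out_def embeddings_def)
qed

lemma embedding_head_no_in:
  assumes "\<phi> \<in> embeddings n" "(u, j, v) \<in> new_edges"
  shows "\<phi> v \<in> no_in VG EG n j"
proof -
  have v: "v \<in> VK"
    using assms(2) by (rule new_edge_mem)
  have "\<not> (\<exists>x. (x, j, \<phi> v) \<in> comp_base_edges EG)"
  proof
    assume "\<exists>x. (x, j, \<phi> v) \<in> comp_base_edges EG"
    then obtain g g' where "\<phi> v = Inl g'" "(g, j, g') \<in> EG"
      by (auto simp: comp_base_edges_iff)
    then show False
      using embedding_Inl[OF assms(1) v] new_edge_head[OF assms(2)] precover_edge_mem[OF precover_G]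
      by blast
  qed
  then show ?thesis
    using assms(1) v by (auto simp: no_in_def embeddings_def)
qed

lemma new_edge_in_completion_iff:
  assumes "\<phi> \<in> embeddings n" "(u, j, v) \<in> new_edges"
  shows "(\<phi> u, j, \<phi> v) \<in> completion_edges k VG EG n \<sigma> \<longleftrightarrow> \<sigma> j (\<phi> u) = \<phi> v"
proof -
  have out: "\<phi> u \<in> no_out VG EG n j"
    using assms by (rule embedding_tail_no_out)
  then have "(\<phi> u, j, \<phi> v) \<notin> comp_base_edges EG"
    by (auto simp: no_out_def)
  then show ?thesis
    using out new_edge_mem(3)[OF assms(2)] by (auto simp: completion_edges_def)
qed

lemma image_edge_in_completion:
  assumes "\<phi> \<in> embeddings n" "(u, j, v) \<in> edge_image \<iota> EG"
  shows "(\<phi> u, j, \<phi> v) \<in> completion_edges k VG EG n \<sigma>"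
  using assms precover_edge_mem[OF precover_G]
  by (force simp: edge_image_def embeddings_def completion_edges_def comp_base_edges_iff)

lemma morphism_into_completion_iff:
  assumes "\<phi> \<in> embeddings n"
  shows "graph_morphism VK EK (comp_vertices VG n) (completion_edges k VG EG n \<sigma>) \<phi>
     \<longleftrightarrow> (\<forall>(u, j, v)\<in>new_edges. \<sigma> j (\<phi> u) = \<phi> v)"
proof -
  have "\<phi> ` VK \<subseteq> comp_vertices VG n"
    using assms by (auto simp: embeddings_def)
  then have "graph_morphism VK EK (comp_vertices VG n) (completion_edges k VG EG n \<sigma>) \<phi>
      \<longleftrightarrow> (\<forall>(u, j, v)\<in>EK. (\<phi> u, j, \<phi> v) \<in> completion_edges k VG EG n \<sigma>)"
    by (simp add: graph_morphism_def)
  also have "\<dots> \<longleftrightarrow> (\<forall>(u, j, v)\<in>new_edges. (\<phi> u, j, \<phi> v) \<in> completion_edges k VG EG n \<sigma>)"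
  proof
    assume new: "\<forall>(u, j, v)\<in>new_edges. (\<phi> u, j, \<phi> v) \<in> completion_edges k VG EG n \<sigma>"
    show "\<forall>(u, j, v)\<in>EK. (\<phi> u, j, \<phi> v) \<in> completion_edges k VG EG n \<sigma>"
    proof clarify
      fix u j v assume "(u, j, v) \<in> EK"
      show "(\<phi> u, j, \<phi> v) \<in> completion_edges k VG EG n \<sigma>"
      proof (cases "(u, j, v) \<in> edge_image \<iota> EG")
        case False
        with \<open>(u, j, v) \<in> EK\<close> have "(u, j, v) \<in> new_edges"
          by (simp add: new_edges_def)
        with new show ?thesis
          by (auto dest: bspec)
      qed (rule image_edge_in_completion[OF assms])
    qed
  qed (auto simp: new_edges_def)
  also have "\<dots> \<longleftrightarrow> (\<forall>(u, j, v)\<in>new_edges. \<sigma> j (\<phi> u) = \<phi> v)"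
    using new_edge_in_completion_iff[OF assms] by auto
  finally show ?thesis .
qed

lemma mem_forced_pairs:
  "p \<in> forced_pairs \<phi> j \<longleftrightarrow> (\<exists>u v. (u, j, v) \<in> new_edges \<and> p = (\<phi> u, \<phi> v))"
  by (force simp: forced_pairs_def edges_labelled_def)

lemma respects_new_edges_iff_forced_pairs:
  "(\<forall>(u, j, v)\<in>new_edges. \<sigma> j (\<phi> u) = \<phi> v)
    \<longleftrightarrow> (\<forall>j<k. \<forall>(x, y)\<in>forced_pairs \<phi> j. \<sigma> j x = y)"
proof
  assume forced: "\<forall>j<k. \<forall>(x, y)\<in>forced_pairs \<phi> j. \<sigma> j x = y"
  show "\<forall>(u, j, v)\<in>new_edges. \<sigma> j (\<phi> u) = \<phi> v"
  proof clarify
    fix u j v assume "(u, j, v) \<in> new_edges"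
    then have "j < k" "(\<phi> u, \<phi> v) \<in> forced_pairs \<phi> j"
      by (auto simp: new_edge_mem(3) mem_forced_pairs)
    with forced show "\<sigma> j (\<phi> u) = \<phi> v"
      by auto
  qed
qed (auto simp: mem_forced_pairs)

lemma forced_pairs_matching:
  assumes "\<phi> \<in> embeddings n"
  shows "forced_pairs \<phi> j \<subseteq> no_out VG EG n j \<times> no_in VG EG n j"
    and "inj_on fst (forced_pairs \<phi> j)"
    and "inj_on snd (forced_pairs \<phi> j)"
proof -
  show "forced_pairs \<phi> j \<subseteq> no_out VG EG n j \<times> no_in VG EG n j"
    using embedding_tail_no_out[OF assms] embedding_head_no_in[OF assms]
    by (auto simp: mem_forced_pairs)
  show "inj_on fst (forced_pairs \<phi> j)"
  proof (rule inj_onI)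
    fix p p' assume "p \<in> forced_pairs \<phi> j" "p' \<in> forced_pairs \<phi> j" "fst p = fst p'"
    then obtain u v u' v' where uv: "(u, j, v) \<in> new_edges" "(u', j, v') \<in> new_edges"
      and p: "p = (\<phi> u, \<phi> v)" "p' = (\<phi> u', \<phi> v')" and "\<phi> u = \<phi> u'"
      by (auto simp: mem_forced_pairs)
    then have "u = u'"
      using embedding_inj[OF assms] new_edge_mem by blast
    then have "v = v'"
      using uv precover_out_unique[OF precover_K] new_edge_mem(4) by blast
    then show "p = p'"
      using p \<open>u = u'\<close> by simp
  qed
  show "inj_on snd (forced_pairs \<phi> j)"
  proof (rule inj_onI)
    fix p p' assume "p \<in> forced_pairs \<phi> j" "p' \<in> forced_pairs \<phi> j" "snd p = snd p'"
    then obtain u v u' v' where uv: "(u, j, v) \<in> new_edges" "(u', j, v') \<in> new_edges"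
      and p: "p = (\<phi> u, \<phi> v)" "p' = (\<phi> u', \<phi> v')" and "\<phi> v = \<phi> v'"
      by (auto simp: mem_forced_pairs)
    then have "v = v'"
      using embedding_inj[OF assms] new_edge_mem by blast
    then have "u = u'"
      using uv precover_in_unique[OF precover_K] new_edge_mem(4) by blast
    then show "p = p'"
      using p \<open>v = v'\<close> by simp
  qed
qed

lemma card_forced_pairs:
  assumes "\<phi> \<in> embeddings n"
  shows "card (forced_pairs \<phi> j) = card (edges_labelled j new_edges)"
proof -
  have "inj_on (\<lambda>(u, _, v). (\<phi> u, \<phi> v)) (edges_labelled j new_edges)"
    using embedding_inj[OF assms] new_edge_mem by (auto simp: inj_on_def edges_labelled_def)
  then show ?thesis
    by (simp add: forced_pairs_def card_image)
qed

lemma card_completion_choices: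
  assumes "card VG \<le> n"
  shows "card (completion_choices k VG EG n) = (\<Prod>j<k. fact (n - card (edges_labelled j EG)))"
proof -
  note finite = precover_finite(1)[OF precover_G]
  have "card {f \<in> extensional (no_out VG EG n j). bij_betw f (no_out VG EG n j) (no_in VG EG n j)}
      = fact (n - card (edges_labelled j EG))" for j
    using card_bij_betw_extending_matching[OF finite_no_out[OF finite] finite_no_in[OF finite], where C = "{}"]
      card_no_out[OF precover_G assms] card_no_in[OF precover_G assms]
    by simp
  then show ?thesis
    by (simp add: completion_choices_def card_PiE)
qed

lemma card_choices_extending:
  assumes "\<phi> \<in> embeddings n" "card VG \<le> n"
  shows "card {\<sigma> \<in> completion_choices k VG EG n. \<forall>(u, j, v)\<in>new_edges. \<sigma> j (\<phi> u) = \<phi> v}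
    = (\<Prod>j<k. fact (n - card (edges_labelled j EG) - card (edges_labelled j new_edges)))"
proof -
  note finite = precover_finite(1)[OF precover_G]
  let ?B = "\<lambda>j. {f \<in> extensional (no_out VG EG n j). bij_betw f (no_out VG EG n j) (no_in VG EG n j)
                  \<and> (\<forall>(x, y)\<in>forced_pairs \<phi> j. f x = y)}"
  have "{\<sigma> \<in> completion_choices k VG EG n. \<forall>(u, j, v)\<in>new_edges. \<sigma> j (\<phi> u) = \<phi> v}
      = (\<Pi>\<^sub>E j\<in>{..<k}. ?B j)"
    unfolding respects_new_edges_iff_forced_pairs
    by (auto simp: completion_choices_def PiE_iff extensional_def)
  moreover have "card (?B j) = fact (n - card (edges_labelled j EG) - card (edges_labelled j new_edges))"
    for j
    using card_bij_betw_extending_matching[OF finite_no_out[OF finite] finite_no_in[OF finite] _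
        forced_pairs_matching[OF assms(1)]]
      card_no_out[OF precover_G assms(2)] card_no_in[OF precover_G assms(2)] card_forced_pairs[OF assms(1)]
    by simp
  ultimately show ?thesis
    by (simp add: card_PiE)
qed

lemma card_embeddings:
  assumes "card VG \<le> n"
  shows "card (embeddings n) = (\<Prod>i<card VK - card VG. n - card VG - i)"
proof -
  define h where "h x = (Inl (the_inv_into VG \<iota> x) :: 'a + nat)" for x
  have h: "h (\<iota> g) = Inl g" if "g \<in> VG" for g
    using that inj_\<iota> by (simp add: h_def the_inv_into_f_f)
  have "embeddings n = {\<phi> \<in> VK \<rightarrow>\<^sub>E comp_vertices VG n. inj_on \<phi> VK \<and> (\<forall>x\<in>\<iota> ` VG. \<phi> x = h x)}"
    by (auto simp: embeddings_def h)
  moreover have "inj_on h (\<iota> ` VG)" "h ` \<iota> ` VG \<subseteq> comp_vertices VG n" "\<iota> ` VG \<subseteq> VK"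
    using h morphism by (auto simp: inj_on_def comp_vertices_def graph_morphism_def)
  moreover have "card (\<iota> ` VG) = card VG"
    using inj_\<iota> by (rule card_image)
  ultimately show ?thesis
    using card_inj_on_extending[of VK "comp_vertices VG n" "\<iota> ` VG" h] assms
      precover_finite(1)[OF precover_K] precover_finite(1)[OF precover_G]
    by (simp add: finite_comp_vertices card_comp_vertices)
qed

lemma finite_embeddings: "finite (embeddings n)"
proof (rule finite_subset)
  show "embeddings n \<subseteq> VK \<rightarrow>\<^sub>E comp_vertices VG n"
    by (auto simp: embeddings_def)
  show "finite (VK \<rightarrow>\<^sub>E comp_vertices VG n)"
    using precover_finite(1)[OF precover_K] precover_finite(1)[OF precover_G]
    by (simp add: finite_PiE finite_comp_vertices)
qed

lemma expected_mu_eq: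
  assumes "card VG \<le> n"
  shows "expected_mu k VG EG VK EK \<iota> n
    = real (card (embeddings n))
      * (\<Prod>j<k. fact (n - card (edges_labelled j EG) - card (edges_labelled j new_edges)))
      / (\<Prod>j<k. fact (n - card (edges_labelled j EG)))"
proof -
  let ?\<Omega> = "completion_choices k VG EG n"
  let ?P = "\<lambda>\<sigma> \<phi>. \<forall>(u, j, v)\<in>new_edges. \<sigma> j (\<phi> u) = \<phi> v"
  have "card ?\<Omega> > 0"
    using card_completion_choices[OF assms] by simp
  then have \<Omega>: "finite ?\<Omega>" "?\<Omega> \<noteq> {}"
    using card_gt_0_iff by blast+
  have "mu VK EK \<iota> VG (comp_vertices VG n) (completion_edges k VG EG n \<sigma>)
      = card {\<phi> \<in> embeddings n. ?P \<sigma> \<phi>}" for \<sigma>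
    unfolding mu_def using morphism_into_completion_iff
    by (intro arg_cong[where f = card]) (auto simp: embeddings_def)
  then have "expected_mu k VG EG VK EK \<iota> n
      = real (\<Sum>\<sigma>\<in>?\<Omega>. card {\<phi> \<in> embeddings n. ?P \<sigma> \<phi>}) / card ?\<Omega>"
    by (simp add: expected_mu_def integral_pmf_of_set[OF \<Omega>(2,1)])
  also have "(\<Sum>\<sigma>\<in>?\<Omega>. card {\<phi> \<in> embeddings n. ?P \<sigma> \<phi>})
      = (\<Sum>\<phi>\<in>embeddings n. card {\<sigma> \<in> ?\<Omega>. ?P \<sigma> \<phi>})"
    using \<Omega>(1) finite_embeddings by (rule sum_card_filter_swap)
  also have "\<dots> = card (embeddings n)
      * (\<Prod>j<k. fact (n - card (edges_labelled j EG) - card (edges_labelled j new_edges)))"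
    using card_choices_extending[OF _ assms] by simp
  finally show ?thesis
    by (simp add: card_completion_choices[OF assms])
qed

lemma expected_mu_eq_prod_ratio:
  assumes "card VK + card EG + card EK \<le> n"
  shows "expected_mu k VG EG VK EK \<iota> n
    = (\<Prod>i<card VK - card VG. real n - real (card VG + i))
      / (\<Prod>(j, i)\<in>(SIGMA j:{..<k}. {..<card (edges_labelled j new_edges)}).
           real n - real (card (edges_labelled j EG) + i))"
proof -
  define d where "d j = card (edges_labelled j EG)" for j
  define e where "e j = card (edges_labelled j new_edges)" for j
  have bounds: "d j \<le> card EG" "e j \<le> card EK" for j
    using precover_finite(2)[OF precover_G] precover_finite(2)[OF precover_K]
    unfolding d_def e_def edges_labelled_def new_edges_def by (auto intro: card_mono)
  have choices: "(\<Prod>j<k. fact (n - d j)) / (\<Prod>j<k. fact (n - d j - e j))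
      = (\<Prod>(j, i)\<in>(SIGMA j:{..<k}. {..<e j}). real n - real (d j + i))"
  proof (rule prod_fact_ratio_Sigma)
    show "d j + e j \<le> n" for j
      using bounds[of j] assms by linarith
  qed simp
  have "real (card (embeddings n)) = (\<Prod>i<card VK - card VG. real (n - card VG - i))"
    using card_embeddings card_VG_le assms by simp
  also have "\<dots> = (\<Prod>i<card VK - card VG. real n - real (card VG + i))"
    using assms by (intro prod.cong) (auto simp: of_nat_diff)
  finally have embeddings: "real (card (embeddings n)) = \<dots>" .
  have "card VG \<le> n"
    using card_VG_le assms by linarith
  then have "expected_mu k VG EG VK EK \<iota> n
      = real (card (embeddings n)) / ((\<Prod>j<k. fact (n - d j)) / (\<Prod>j<k. fact (n - d j - e j)))"
    unfolding divide_divide_eq_right d_def e_def by (rule expected_mu_eq)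
  then show ?thesis
    unfolding embeddings choices by (simp only: d_def e_def)
qed

end

theorem mainTheorem7:
  fixes k :: nat
    and VG :: "'a set" and EG :: "('a \<times> nat \<times> 'a) set"
    and VH :: "'b set" and EH :: "('b \<times> nat \<times> 'b) set"
    and VK :: "'c set" and EK :: "('c \<times> nat \<times> 'c) set"
    and q :: "('a + 'b) \<Rightarrow> 'c"
  assumes "is_precover k VG EG"
    and "is_precover k VH EH"
    and "is_quotient k (du_vertices VG VH) (du_edges EG EH) VK EK q"
    and "inj_on (q \<circ> Inl) VG"
  defines "chiGK \<equiv> euler_char VK EK - euler_char VG EG"
  shows "(\<lambda>n. expected_mu k VG EG VK EK (q \<circ> Inl) n - real n powr of_int chiGK)
           \<in> O(\<lambda>n. real n powr of_int (chiGK - 1))"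
proof -
  interpret precover_inclusion k VG EG VK EK "q \<circ> Inl"
    using assms(1,3,4) by unfold_locales (auto simp: is_quotient_def intro: graph_morphism_du_Inl)
  define I where "I = {..<card VK - card VG}"
  define J where "J = (SIGMA j:{..<k}. {..<card (edges_labelled j new_edges)})"
  have "card J + card EG = card EK"
    using sum_card_new_edges_labelled by (simp add: J_def card_SigmaI)
  then have chi: "chiGK = int (card I) - int (card J)"
    using card_VG_le by (simp add: I_def chiGK_def euler_char_def of_nat_diff)
  let ?ratio = "\<lambda>n. (\<Prod>i\<in>I. real n - real (card VG + i))
    / (\<Prod>p\<in>J. real n - real (card (edges_labelled (fst p) EG) + snd p))"
  have asymptotics: "(\<lambda>n. ?ratio n - real n powr of_int chiGK) \<in> O(\<lambda>n. real n powr of_int (chiGK - 1))"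
    unfolding chi by (rule prod_ratio_asymptotics) (simp_all add: I_def J_def)
  have eventually_eq: "\<forall>\<^sub>F n in at_top. ?ratio n - real n powr of_int chiGK
      = expected_mu k VG EG VK EK (q \<circ> Inl) n - real n powr of_int chiGK"
    using eventually_ge_at_top[of "card VK + card EG + card EK"]
    by eventually_elim (simp only: expected_mu_eq_prod_ratio I_def J_def split_def)
  from eventually_eq asymptotics show ?thesis
    by (rule landau_o.big.in_cong[THEN iffD1])
qed

end
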